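(* Let $E,F$ be normed spaces over $\mathbb K$ with $F$ spherically complete, let $D\subseteq E$ be a linear subspace and $S\in\mathcal L(D,F)$. Let $\mathcal U\subseteq\mathcal L(E,F)$ be nonempty and for each $U\in\mathcal U$ let $\epsilon_U>0$ be such that $\|U-V\|\le\max(\epsilon_U,\epsilon_V)$ for all $U,V\in\mathcal U$, and $\|Sx-Ux\|\le\epsilon_U\|x\|$ for all $U\in\mathcal U$ and $x\in D$. Then there exists $\overline S\in\mathcal L(E,F)$ with $\overline S|_D=S$ and $\|\overline S-U\|\le\epsilon_U$ for every $U\in\mathcal U$.
   Context: $\mathbb K$: nontrivially normed field with ultrametric absolute value; normed space over $\mathbb K$: normed vector space with $\|x+y\|\le\max(\|x\|,\|y\|)$. $\mathcal L(X,Y)$ is the space of continuous linear maps with operator norm. Spherically complete: every decreasing sequence of closed balls (radii $\ge0$) has nonempty intersection. *)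

theory Defs
  imports Complex_Main
begin

definition nonarch_valued_field :: "('k::field \<Rightarrow> real) \<Rightarrow> bool" where
  "nonarch_valued_field absK \<longleftrightarrow>
     (\<forall>a. absK a \<ge> 0) \<and> (\<forall>a. absK a = 0 \<longleftrightarrow> a = 0) \<and>
     (\<forall>a b. absK (a * b) = absK a * absK b) \<and>
     (\<forall>a b. absK (a + b) \<le> max (absK a) (absK b)) \<and>
     (\<exists>a. absK a \<noteq> 0 \<and> absK a \<noteq> 1)"

definition ultra_normed_space ::
  "('k::field \<Rightarrow> real) \<Rightarrow> ('k \<Rightarrow> 'v::ab_group_add \<Rightarrow> 'v) \<Rightarrow> ('v \<Rightarrow> real) \<Rightarrow> bool" where
  "ultra_normed_space absK sm nv \<longleftrightarrow>
     (\<forall>a x y. sm a (x + y) = sm a x + sm a y) \<and>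
     (\<forall>a b x. sm (a + b) x = sm a x + sm b x) \<and>
     (\<forall>a b x. sm (a * b) x = sm a (sm b x)) \<and>
     (\<forall>x. sm 1 x = x) \<and>
     (\<forall>x. nv x \<ge> 0) \<and> (\<forall>x. nv x = 0 \<longleftrightarrow> x = 0) \<and>
     (\<forall>a x. nv (sm a x) = absK a * nv x) \<and>
     (\<forall>x y. nv (x + y) \<le> max (nv x) (nv y))"

definition ncball :: "('v::ab_group_add \<Rightarrow> real) \<Rightarrow> 'v \<Rightarrow> real \<Rightarrow> 'v set" where
  "ncball nv c r = {y. nv (y - c) \<le> r}"

definition spherically_complete :: "('v::ab_group_add \<Rightarrow> real) \<Rightarrow> bool" where
  "spherically_complete nv \<longleftrightarrow>
     (\<forall>(c::nat \<Rightarrow> 'v) (r::nat \<Rightarrow> real).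
        (\<forall>n. r n \<ge> 0) \<and> (\<forall>n. ncball nv (c (Suc n)) (r (Suc n)) \<subseteq> ncball nv (c n) (r n))
        \<longrightarrow> (\<Inter>n. ncball nv (c n) (r n)) \<noteq> {})"

definition linear_subspace :: "('k \<Rightarrow> 'v::ab_group_add \<Rightarrow> 'v) \<Rightarrow> 'v set \<Rightarrow> bool" where
  "linear_subspace sm D \<longleftrightarrow> 0 \<in> D \<and> (\<forall>x\<in>D. \<forall>y\<in>D. x + y \<in> D) \<and> (\<forall>a. \<forall>x\<in>D. sm a x \<in> D)"

definition cont_linear_on ::
  "('k \<Rightarrow> 'v::ab_group_add \<Rightarrow> 'v) \<Rightarrow> ('v \<Rightarrow> real) \<Rightarrow> ('k \<Rightarrow> 'w::ab_group_add \<Rightarrow> 'w) \<Rightarrow> ('w \<Rightarrow> real)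
    \<Rightarrow> 'v set \<Rightarrow> ('v \<Rightarrow> 'w) \<Rightarrow> bool" where
  "cont_linear_on smv nv smw nw X T \<longleftrightarrow>
     (\<forall>x\<in>X. \<forall>y\<in>X. T (x + y) = T x + T y) \<and>
     (\<forall>a. \<forall>x\<in>X. T (smv a x) = smw a (T x)) \<and>
     (\<forall>x\<in>X. \<forall>e>0. \<exists>d>0. \<forall>y\<in>X. nv (y - x) < d \<longrightarrow> nw (T y - T x) < e)"

definition opnorm :: "('v::ab_group_add \<Rightarrow> real) \<Rightarrow> ('w \<Rightarrow> real) \<Rightarrow> 'v set \<Rightarrow> ('v \<Rightarrow> 'w) \<Rightarrow> real" where
  "opnorm nv nw X T = Sup ({nw (T x) / nv x | x. x \<in> X \<and> x \<noteq> 0} \<union> {0})"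

end

(*
  By Zorn's lemma there is a maximal linear map T on a subspace M containing D that extends S
  and satisfies nF (T x - U x) \<le> eps U * nE x for all U in the family.  For z outside M, a
  value w for T z is admissible exactly when w lies in every ball with centre U (z + m) - T m
  and radius eps U * nE (z + m), for m in M and U in the family.  The ultrametric inequality
  and the hypothesis on U - V make these balls meet pairwise, and in a spherically complete
  space such a family, not only a nested sequence, has a common point; so M is everything.
  The extension is continuous because it stays within eps U * nE x of a continuous U.
*)

theory Submission
  imports Defs
begin

lemma exists_nonincreasing_seq_to_Inf:
  fixes r :: "'a \<Rightarrow> real"
  assumes "I \<noteq> {}" "bdd_below (r ` I)"
  shows "\<exists>f. \<forall>n. f n \<in> I \<and> r (f n) < Inf (r ` I) + 1 / Suc n \<and> r (f (Suc n)) \<le> r (f n)"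
proof -
  have near_inf: "\<exists>j\<in>I. r j < Inf (r ` I) + e" if "e > 0" for e
    using cInf_lessD[of "r ` I" "Inf (r ` I) + e"] assms(1) that by auto
  have "\<exists>f. \<forall>n. (f n \<in> I \<and> r (f n) < Inf (r ` I) + 1 / Suc n) \<and> r (f (Suc n)) \<le> r (f n)"
  proof (rule dependent_nat_choice)
    show "\<exists>i. i \<in> I \<and> r i < Inf (r ` I) + 1 / Suc 0"
      using near_inf[of 1] by auto
  next
    fix i n assume i: "i \<in> I \<and> r i < Inf (r ` I) + 1 / Suc n"
    show "\<exists>j. (j \<in> I \<and> r j < Inf (r ` I) + 1 / Suc (Suc n)) \<and> r j \<le> r i"
    proof (cases "r i < Inf (r ` I) + 1 / Suc (Suc n)")
      case False
      then show ?thesis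
        using near_inf[of "1 / Suc (Suc n)"] by force
    qed (use i in auto)
  qed
  then show ?thesis
    by blast
qed

lemma exists_power_int_bracket:
  fixes c a :: real
  assumes "c > 1" "a > 0"
  shows "\<exists>k. c powi k \<le> a \<and> a < c powi (k + 1)"
proof
  let ?k = "\<lfloor>log c a\<rfloor>"
  have powr_eq: "c powr real_of_int k = c powi k" for k
    using assms(1) by (simp add: powr_real_of_int')
  have "c powr ?k \<le> a \<and> a < c powr (?k + 1)"
    using floor_log_eq_powr_iff[OF assms(2,1)] by blast
  then show "c powi ?k \<le> a \<and> a < c powi (?k + 1)"
    using powr_eq[of "?k + 1"] by (simp add: powr_eq)
qed

locale nonarch_field =
  fixes absK :: "'k::field \<Rightarrow> real"
  assumes nonarch_valued_field: "nonarch_valued_field absK"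
begin

lemma absK_nonneg: "absK a \<ge> 0"
  and absK_eq_0_iff: "absK a = 0 \<longleftrightarrow> a = 0"
  and absK_mult: "absK (a * b) = absK a * absK b"
  using nonarch_valued_field unfolding nonarch_valued_field_def by auto

lemma absK_zero [simp]: "absK 0 = 0"
  by (simp add: absK_eq_0_iff)

lemma absK_one [simp]: "absK 1 = 1"
  using absK_mult[of 1 1] absK_eq_0_iff[of 1] by (metis mult_cancel_left1 one_neq_zero)

lemma absK_minus_one [simp]: "absK (-1) = 1"
proof -
  have "absK (-1) * absK (-1) = 1"
    using absK_mult[of "-1" "-1"] by simp
  then show ?thesis
    using absK_nonneg[of "-1"] by (metis abs_of_nonneg abs_square_eq_1 power2_eq_square)
qed

lemma absK_inverse: "a \<noteq> 0 \<Longrightarrow> absK (inverse a) = inverse (absK a)"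
  using absK_mult[of a "inverse a"] by (simp add: inverse_unique)

lemma absK_power: "absK (a ^ n) = absK a ^ n"
  by (induction n) (simp_all add: absK_mult)

lemma absK_power_int: "a \<noteq> 0 \<Longrightarrow> absK (a powi k) = absK a powi k"
  by (simp add: power_int_def absK_power absK_inverse)

lemma exists_absK_gt_one: "\<exists>p. absK p > 1"
proof -
  obtain a where a: "absK a \<noteq> 0" "absK a \<noteq> 1"
    using nonarch_valued_field unfolding nonarch_valued_field_def by auto
  show ?thesis
  proof (cases "absK a > 1")
    case False
    have "0 < absK a" "absK a < 1"
      using a False absK_nonneg[of a] by linarith+
    moreover have "a \<noteq> 0"
      using a(1) by auto
    ultimately have "absK (inverse a) > 1"
      by (simp add: absK_inverse one_less_inverse)
    then show ?thesis ..
  qed blast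
qed

end

locale ultra_normed = nonarch_field absK for absK :: "'k::field \<Rightarrow> real" +
  fixes sm :: "'k \<Rightarrow> 'v::ab_group_add \<Rightarrow> 'v" and nv :: "'v \<Rightarrow> real"
  assumes ultra_normed_space: "ultra_normed_space absK sm nv"
begin

lemma scale_right_distrib: "sm a (x + y) = sm a x + sm a y"
  and scale_left_distrib: "sm (a + b) x = sm a x + sm b x"
  and scale_scale: "sm a (sm b x) = sm (a * b) x"
  and scale_one [simp]: "sm 1 x = x"
  and norm_ge_zero: "nv x \<ge> 0"
  and norm_eq_zero [simp]: "nv x = 0 \<longleftrightarrow> x = 0"
  and norm_scale: "nv (sm a x) = absK a * nv x"
  and norm_add_le_max: "nv (x + y) \<le> max (nv x) (nv y)"
  using ultra_normed_space unfolding ultra_normed_space_def by auto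

lemma scale_zero_left [simp]: "sm 0 x = 0"
  using scale_left_distrib[of 0 0 x] by simp

lemma scale_zero_right [simp]: "sm a 0 = 0"
  using scale_right_distrib[of a 0 0] by simp

lemma scale_minus_one_left: "sm (-1) x = - x"
  using scale_left_distrib[of 1 "-1" x] by (simp add: eq_neg_iff_add_eq_0 add.commute)

lemma scale_minus_right: "sm a (- x) = - sm a x"
  using scale_right_distrib[of a x "- x"] by (simp add: eq_neg_iff_add_eq_0 add.commute)

lemma scale_diff_right: "sm a (x - y) = sm a x - sm a y"
  using scale_right_distrib[of a x "- y"] by (simp add: scale_minus_right)

lemma scale_diff_left: "sm (a - b) x = sm a x - sm b x"
  using scale_left_distrib[of a "- b" x] scale_scale[of "-1" b x]
  by (simp add: scale_minus_one_left)

lemma norm_zero [simp]: "nv 0 = 0"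
  by simp

lemma norm_pos: "x \<noteq> 0 \<Longrightarrow> nv x > 0"
  using norm_ge_zero[of x] by (simp add: order_less_le)

lemma norm_minus_cancel [simp]: "nv (- x) = nv x"
  using norm_scale[of "-1" x] by (simp add: scale_minus_one_left)

lemma norm_minus_commute: "nv (x - y) = nv (y - x)"
  using norm_minus_cancel[of "x - y"] by simp

lemma norm_diff_le_max: "nv (x - y) \<le> max (nv x) (nv y)"
  using norm_add_le_max[of x "- y"] by simp

lemma norm_triangle_max: "nv (x - z) \<le> max (nv (x - y)) (nv (y - z))"
  using norm_add_le_max[of "x - y" "y - z"] by simp

text \<open>For balls of an ultrametric norm the hypothesis on the centres says exactly that the
  balls meet pairwise.\<close>

lemma spherically_complete_common_point:
  assumes sc: "spherically_complete nv"
    and close: "\<And>i j. i \<in> I \<Longrightarrow> j \<in> I \<Longrightarrow> nv (c i - c j) \<le> max (r i) (r j)"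
  shows "\<exists>y. \<forall>i\<in>I. nv (y - c i) \<le> r i"
proof (cases "I = {}")
  case False
  have r_nonneg: "r i \<ge> 0" if "i \<in> I" for i
    using close[OF that that] by simp
  have ball_mono: "nv (y - c j) \<le> r j"
    if "i \<in> I" "j \<in> I" "r i \<le> r j" "nv (y - c i) \<le> r i" for i j y
    using norm_triangle_max[of y "c j" "c i"] close[of i j] that by auto
  define \<rho> where "\<rho> = Inf (r ` I)"
  have bdd: "bdd_below (r ` I)"
    using r_nonneg by (meson bdd_belowI2)
  have rho_le: "\<rho> \<le> r i" if "i \<in> I" for i
    unfolding \<rho>_def using cInf_lower[OF _ bdd] that by blast
  obtain f where f: "\<And>n. f n \<in> I \<and> r (f n) < \<rho> + 1 / Suc n \<and> r (f (Suc n)) \<le> r (f n)"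
    using exists_nonincreasing_seq_to_Inf[OF False bdd] unfolding \<rho>_def by blast
  have "(\<Inter>n. ncball nv (c (f n)) (r (f n))) \<noteq> {}"
  proof (rule sc[unfolded spherically_complete_def, rule_format], intro conjI allI subsetI)
    show "r (f n) \<ge> 0" for n
      using f r_nonneg by blast
    show "y \<in> ncball nv (c (f n)) (r (f n))" if "y \<in> ncball nv (c (f (Suc n))) (r (f (Suc n)))" for n y
      using that f ball_mono[of "f (Suc n)" "f n" y] unfolding ncball_def by blast
  qed
  then obtain y where y: "\<And>n. nv (y - c (f n)) \<le> r (f n)"
    unfolding ncball_def by blast
  have "nv (y - c i) \<le> r i" if i: "i \<in> I" for i
  proof (rule field_le_epsilon)
    fix e :: real assume "e > 0"
    then obtain n where n: "1 / Suc n < e"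
      using reals_Archimedean by (auto simp: inverse_eq_divide)
    have "nv (y - c i) \<le> max (nv (y - c (f n))) (nv (c (f n) - c i))"
      by (rule norm_triangle_max)
    also have "\<dots> \<le> max (r (f n)) (r i)"
      using y close[of "f n" i] f i by (meson max.boundedI max.coboundedI1 order_trans)
    also have "\<dots> \<le> r i + e"
      using f[of n] rho_le[OF i] n \<open>e > 0\<close> by auto
    finally show "nv (y - c i) \<le> r i + e" .
  qed
  then show ?thesis
    by blast
qed simp

end

lemma cont_linear_on_UNIV:
  assumes "cont_linear_on smv nv smw nw UNIV T"
  shows cont_linear_scale: "T (smv a x) = smw a (T x)"
    and cont_linear_diff: "T (x - y) = T x - T y"
    and cont_linear_zero: "T 0 = 0"
proof -
  have add: "T (x + y) = T x + T y" for x y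
    using assms unfolding cont_linear_on_def by blast
  show "T (smv a x) = smw a (T x)"
    using assms unfolding cont_linear_on_def by blast
  show "T (x - y) = T x - T y"
    using add[of "x - y" y] by (simp add: eq_diff_eq)
  show "T 0 = 0"
    using add[of 0 0] by simp
qed

definition linear_graph ::
  "('k \<Rightarrow> 'v::ab_group_add \<Rightarrow> 'v) \<Rightarrow> ('k \<Rightarrow> 'w::ab_group_add \<Rightarrow> 'w) \<Rightarrow> ('v \<times> 'w) set \<Rightarrow> bool" where
  "linear_graph smv smw G \<longleftrightarrow> (0, 0) \<in> G \<and>
     (\<forall>x y x' y'. (x, y) \<in> G \<longrightarrow> (x', y') \<in> G \<longrightarrow> (x + x', y + y') \<in> G) \<and>
     (\<forall>a x y. (x, y) \<in> G \<longrightarrow> (smv a x, smw a y) \<in> G)"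

lemma linear_graphD:
  assumes "linear_graph smv smw G"
  shows linear_graph_zero: "(0, 0) \<in> G"
    and linear_graph_add: "(x, y) \<in> G \<Longrightarrow> (x', y') \<in> G \<Longrightarrow> (x + x', y + y') \<in> G"
    and linear_graph_scale: "(x, y) \<in> G \<Longrightarrow> (smv a x, smw a y) \<in> G"
  using assms unfolding linear_graph_def by blast+

locale ultra_normed_pair =
  E: ultra_normed absK smE nE + F: ultra_normed absK smF nF
  for absK :: "'k::field \<Rightarrow> real"
    and smE :: "'k \<Rightarrow> 'e::ab_group_add \<Rightarrow> 'e" and nE :: "'e \<Rightarrow> real"
    and smF :: "'k \<Rightarrow> 'f::ab_group_add \<Rightarrow> 'f" and nF :: "'f \<Rightarrow> real"
begin

lemma cont_linear_bounded:
  assumes T: "cont_linear_on smE nE smF nF UNIV T"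
  shows "\<exists>C. \<forall>x. nF (T x) \<le> C * nE x"
proof -
  obtain d where "d > 0" and small: "\<And>y. nE y < d \<Longrightarrow> nF (T y) < 1"
    using T cont_linear_zero[OF T] unfolding cont_linear_on_def
    by (metis UNIV_I diff_zero zero_less_one)
  obtain p where p: "absK p > 1"
    using E.exists_absK_gt_one by blast
  define c where "c = absK p"
  have "c > 1" "p \<noteq> 0"
    using p unfolding c_def by auto
  have "nF (T x) \<le> c\<^sup>2 / d * nE x" for x
  proof (cases "x = 0")
    case False
    then have "nE x > 0"
      by (rule E.norm_pos)
    \<comment> \<open>rescale x by a power of p into the ball of radius d on which T is below 1\<close>
    then obtain k where k: "c powi k \<le> d / (c * nE x)" "d / (c * nE x) < c powi (k + 1)"
      using exists_power_int_bracket[of c "d / (c * nE x)"] \<open>c > 1\<close> \<open>d > 0\<close> by auto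
    have ck: "c powi k > 0" "c powi (k + 1) = c * c powi k"
      using \<open>c > 1\<close> by (simp_all add: power_int_add)
    have "nE (smE (p powi k) x) = c powi k * nE x"
      using E.norm_scale E.absK_power_int[OF \<open>p \<noteq> 0\<close>] unfolding c_def by simp
    also have "\<dots> < c * (c powi k * nE x)"
      using ck(1) \<open>nE x > 0\<close> \<open>c > 1\<close> by simp
    also have "\<dots> \<le> d"
      using k(1) \<open>nE x > 0\<close> \<open>c > 1\<close> by (simp add: field_simps)
    finally have "nF (T (smE (p powi k) x)) < 1"
      by (rule small)
    then have "c powi k * nF (T x) < 1"
      using cont_linear_scale[OF T] F.norm_scale E.absK_power_int[OF \<open>p \<noteq> 0\<close>]
      unfolding c_def by simp
    moreover have "d < c\<^sup>2 * c powi k * nE x"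
      using k(2) ck \<open>nE x > 0\<close> \<open>c > 1\<close> by (simp add: field_simps power2_eq_square)
    ultimately have "c powi k * (d * nF (T x)) < c powi k * (c\<^sup>2 * nE x)"
      using \<open>d > 0\<close> ck(1) F.norm_ge_zero[of "T x"]
      by (smt (verit, best) mult.assoc mult.left_commute mult_left_mono mult_less_cancel_left2)
    then show ?thesis
      using ck(1) \<open>d > 0\<close> by (simp add: field_simps)
  qed (simp add: cont_linear_zero[OF T])
  then show ?thesis
    by blast
qed

lemma opnorm_le:
  assumes "\<And>x. nF (T x) \<le> c * nE x" and "c \<ge> 0"
  shows "opnorm nE nF UNIV T \<le> c"
  unfolding opnorm_def
proof (rule cSup_least)
  fix r assume "r \<in> {nF (T x) / nE x |x. x \<in> UNIV \<and> x \<noteq> 0} \<union> {0}"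
  then show "r \<le> c"
    using assms E.norm_pos by (auto simp: divide_le_eq)
qed blast

lemma norm_le_opnorm:
  assumes bound: "\<And>x. nF (T x) \<le> C * nE x"
  shows "nF (T x) \<le> opnorm nE nF UNIV T * nE x"
proof (cases "x = 0")
  case False
  let ?Q = "{nF (T x) / nE x |x. x \<in> UNIV \<and> x \<noteq> 0} \<union> {0}"
  have "nF (T y) \<le> max C 0 * nE y" for y
    using bound[of y] mult_right_mono[OF max.cobounded1 E.norm_ge_zero] by (rule order_trans)
  then have "bdd_above ?Q"
    using E.norm_pos by (intro bdd_aboveI[of _ "max C 0"]) (auto simp: divide_le_eq)
  then have "nF (T x) / nE x \<le> Sup ?Q"
    using False by (intro cSup_upper) auto
  then show ?thesis
    using E.norm_pos[OF False] by (simp add: opnorm_def divide_le_eq)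
qed (use bound[of 0] in simp)

lemma norm_diff_le_of_opnorm_le:
  assumes U: "cont_linear_on smE nE smF nF UNIV U" and V: "cont_linear_on smE nE smF nF UNIV V"
    and "opnorm nE nF UNIV (\<lambda>x. U x - V x) \<le> m"
  shows "nF (U x - V x) \<le> m * nE x"
proof -
  obtain C1 C2 where C: "\<And>x. nF (U x) \<le> C1 * nE x" "\<And>x. nF (V x) \<le> C2 * nE x"
    using cont_linear_bounded[OF U] cont_linear_bounded[OF V] by blast
  have "nF (U x - V x) \<le> max C1 C2 * nE x" for x
    using F.norm_diff_le_max[of "U x" "V x"] C[of x] E.norm_ge_zero[of x]
    by (smt (verit) max.absorb_iff2 max_def mult_right_mono)
  then have "nF (U x - V x) \<le> opnorm nE nF UNIV (\<lambda>x. U x - V x) * nE x"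
    by (rule norm_le_opnorm)
  also have "\<dots> \<le> m * nE x"
    using assms(3) E.norm_ge_zero by (rule mult_right_mono)
  finally show ?thesis .
qed

lemma cont_linear_on_UNIV_if_close:
  assumes add: "\<And>x y. T (x + y) = T x + T y" and scale: "\<And>a x. T (smE a x) = smF a (T x)"
    and U: "cont_linear_on smE nE smF nF UNIV U"
    and close: "\<And>x. nF (T x - U x) \<le> C * nE x" and "C > 0"
  shows "cont_linear_on smE nE smF nF UNIV T"
  unfolding cont_linear_on_def
proof (intro conjI ballI allI impI add scale)
  fix x and e :: real assume "e > 0"
  obtain d where "d > 0" and d: "\<And>y. nE (y - x) < d \<Longrightarrow> nF (U y - U x) < e"
    using U \<open>e > 0\<close> unfolding cont_linear_on_def by blast
  have "nF (T y - T x) < e" if y: "nE (y - x) < min d (e / C)" for y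
  proof -
    have "T y - T x = (T (y - x) - U (y - x)) + (U y - U x)"
      using add[of "y - x" x] cont_linear_diff[OF U] by (simp add: algebra_simps)
    moreover have "nF (T (y - x) - U (y - x)) < e"
      using close[of "y - x"] y \<open>C > 0\<close> by (smt (verit) min_less_iff_conj mult.commute pos_less_divide_eq)
    ultimately show ?thesis
      using F.norm_add_le_max d y by (smt (verit) min_less_iff_conj)
  qed
  then show "\<exists>d>0. \<forall>y\<in>UNIV. nE (y - x) < d \<longrightarrow> nF (T y - T x) < e"
    using \<open>d > 0\<close> \<open>e > 0\<close> \<open>C > 0\<close> by (intro exI[of _ "min d (e / C)"]) auto
qed

lemma linear_graph_diff:
  assumes "linear_graph smE smF G" "(x, y) \<in> G" "(x', y') \<in> G"
  shows "(x - x', y - y') \<in> G"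
  using linear_graph_add[OF assms(1,2) linear_graph_scale[OF assms(1,3), of "-1"]]
  by (simp add: E.scale_minus_one_left F.scale_minus_one_left)

definition extend_graph :: "('e \<times> 'f) set \<Rightarrow> 'e \<Rightarrow> 'f \<Rightarrow> ('e \<times> 'f) set" where
  "extend_graph G z w = {(m + smE a z, t + smF a w) | m t a. (m, t) \<in> G}"

lemma extend_graphI: "(m, t) \<in> G \<Longrightarrow> (m + smE a z, t + smF a w) \<in> extend_graph G z w"
  unfolding extend_graph_def by blast

lemma subset_extend_graph: "G \<subseteq> extend_graph G z w"
  using extend_graphI[where a = 0] by auto

lemma Domain_extend_graph: "(0, 0) \<in> G \<Longrightarrow> z \<in> Domain (extend_graph G z w)"
  using extend_graphI[where a = 1] by force

lemma linear_graph_extend_graph: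
  assumes G: "linear_graph smE smF G"
  shows "linear_graph smE smF (extend_graph G z w)"
  unfolding linear_graph_def
proof (intro conjI allI impI)
  show "(0, 0) \<in> extend_graph G z w"
    using linear_graph_zero[OF G] subset_extend_graph by blast
next
  fix x y x' y'
  assume "(x, y) \<in> extend_graph G z w" "(x', y') \<in> extend_graph G z w"
  then obtain m t a m' t' a' where "(m, t) \<in> G" "(m', t') \<in> G"
    and "x = m + smE a z" "y = t + smF a w" "x' = m' + smE a' z" "y' = t' + smF a' w"
    unfolding extend_graph_def by blast
  moreover have "(m + m', t + t') \<in> G"
    using linear_graph_add[OF G] calculation by blast
  ultimately show "(x + x', y + y') \<in> extend_graph G z w"
    using extend_graphI[of "m + m'" "t + t'" G "a + a'"]
    by (simp add: E.scale_left_distrib F.scale_left_distrib algebra_simps)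
next
  fix b x y
  assume "(x, y) \<in> extend_graph G z w"
  then obtain m t a where "(m, t) \<in> G" "x = m + smE a z" "y = t + smF a w"
    unfolding extend_graph_def by blast
  moreover have "(smE b m, smF b t) \<in> G"
    using linear_graph_scale[OF G] calculation by blast
  ultimately show "(smE b x, smF b y) \<in> extend_graph G z w"
    using extend_graphI[of "smE b m" "smF b t" G "b * a"]
    by (simp add: E.scale_right_distrib F.scale_right_distrib E.scale_scale F.scale_scale)
qed

lemma single_valued_extend_graph:
  assumes sv: "single_valued G" and G: "linear_graph smE smF G" and z: "z \<notin> Domain G"
  shows "single_valued (extend_graph G z w)"
proof (rule single_valuedI)
  fix x y y'
  assume "(x, y) \<in> extend_graph G z w" "(x, y') \<in> extend_graph G z w"
  then obtain m t a m' t' a' where mt: "(m, t) \<in> G" "(m', t') \<in> G"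
    and x: "x = m + smE a z" "x = m' + smE a' z" and "y = t + smF a w" "y' = t' + smF a' w"
    unfolding extend_graph_def by blast
  have diff: "smE (a - a') z = m' - m"
    using x by (simp add: E.scale_diff_left algebra_simps)
  have "a = a'"
  proof (rule ccontr)
    assume "a \<noteq> a'"
    then have "z = smE (inverse (a - a')) (m' - m)"
      by (simp flip: diff add: E.scale_scale)
    then have "(z, smF (inverse (a - a')) (t' - t)) \<in> G"
      using linear_graph_scale[OF G linear_graph_diff[OF G mt(2,1)]] by simp
    then show False
      using z by blast
  qed
  then have "m = m'"
    using x by simp
  then show "y = y'"
    using single_valuedD[OF sv mt(1)] mt(2) \<open>a = a'\<close> \<open>y = t + smF a w\<close> \<open>y' = t' + smF a' w\<close> by simp
qed

end

locale approximating_family = ultra_normed_pair absK smE nE smF nF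
  for absK :: "'k::field \<Rightarrow> real"
    and smE :: "'k \<Rightarrow> 'e::ab_group_add \<Rightarrow> 'e" and nE :: "'e \<Rightarrow> real"
    and smF :: "'k \<Rightarrow> 'f::ab_group_add \<Rightarrow> 'f" and nF :: "'f \<Rightarrow> real" +
  fixes \<U> :: "('e \<Rightarrow> 'f) set" and eps :: "('e \<Rightarrow> 'f) \<Rightarrow> real"
  assumes F_spherically_complete: "spherically_complete nF"
    and cont_linear_family: "U \<in> \<U> \<Longrightarrow> cont_linear_on smE nE smF nF UNIV U"
    and eps_pos: "U \<in> \<U> \<Longrightarrow> eps U > 0"
    and family_close: "U \<in> \<U> \<Longrightarrow> V \<in> \<U> \<Longrightarrow> nF (U x - V x) \<le> max (eps U) (eps V) * nE x"
begin

text \<open>Partial extensions are handled through their graphs, so that a chain of them is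
  bounded by its union.\<close>

definition approx_graph :: "('e \<times> 'f) set \<Rightarrow> bool" where
  "approx_graph G \<longleftrightarrow> single_valued G \<and> linear_graph smE smF G \<and>
     (\<forall>x y U. (x, y) \<in> G \<longrightarrow> U \<in> \<U> \<longrightarrow> nF (y - U x) \<le> eps U * nE x)"

lemma approx_graphD:
  assumes "approx_graph G"
  shows "single_valued G" and "linear_graph smE smF G"
    and "(x, y) \<in> G \<Longrightarrow> U \<in> \<U> \<Longrightarrow> nF (y - U x) \<le> eps U * nE x"
  using assms unfolding approx_graph_def by blast+

lemma approx_graph_Union:
  assumes "C \<noteq> {}" and approx: "\<And>G. G \<in> C \<Longrightarrow> approx_graph G"
    and chain: "\<And>G H. G \<in> C \<Longrightarrow> H \<in> C \<Longrightarrow> G \<subseteq> H \<or> H \<subseteq> G"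
  shows "approx_graph (\<Union>C)"
  unfolding approx_graph_def linear_graph_def
proof (intro conjI allI impI single_valuedI)
  note G = approx_graphD(1,2)[OF approx] linear_graphD[OF approx_graphD(2)[OF approx]]
  show "(0, 0) \<in> \<Union>C"
    using G \<open>C \<noteq> {}\<close> by blast
  have common: "\<exists>G\<in>C. p \<in> G \<and> q \<in> G" if pq: "p \<in> \<Union>C" "q \<in> \<Union>C" for p q
  proof -
    obtain G H where "G \<in> C" "H \<in> C" "p \<in> G" "q \<in> H"
      using pq by blast
    then show ?thesis
      using chain[of G H] by blast
  qed
  show "y = y'" if "(x, y) \<in> \<Union>C" "(x, y') \<in> \<Union>C" for x y y'
    using common[OF that] G(1) single_valuedD by metis
  show "(x + x', y + y') \<in> \<Union>C" if "(x, y) \<in> \<Union>C" "(x', y') \<in> \<Union>C" for x y x' y'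
    using common[OF that] G(4) by blast
  show "(smE a x, smF a y) \<in> \<Union>C" if "(x, y) \<in> \<Union>C" for a x y
    using that G(5) by blast
  show "nF (y - U x) \<le> eps U * nE x" if "(x, y) \<in> \<Union>C" "U \<in> \<U>" for x y U
    using that approx_graphD(3)[OF approx] by blast
qed

lemma approx_graph_centres_close:
  assumes G: "approx_graph G" and mt: "(m, t) \<in> G" "(m', t') \<in> G" and UV: "U \<in> \<U>" "V \<in> \<U>"
  shows "nF ((U (z + m) - t) - (V (z + m') - t')) \<le> max (eps U * nE (z + m)) (eps V * nE (z + m'))"
proof -
  have ordered: "nF ((U (z + m) - t) - (V (z + m') - t')) \<le> max (eps U * nE (z + m)) (eps V * nE (z + m'))"
    if "eps U \<le> eps V" "(m, t) \<in> G" "(m', t') \<in> G" "U \<in> \<U>" "V \<in> \<U>" for U V m t m' t'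
  proof -
    have "(m' - m, t' - t) \<in> G"
      using linear_graph_diff[OF approx_graphD(2)[OF G]] that by blast
    then have "nF ((t' - t) - U (m' - m)) \<le> eps U * nE ((z + m') - (z + m))"
      using approx_graphD(3)[OF G] that by simp
    also have "\<dots> \<le> eps U * max (nE (z + m')) (nE (z + m))"
      using E.norm_diff_le_max[of "z + m'" "z + m"] eps_pos that by (simp add: mult_left_mono)
    also have "\<dots> \<le> max (eps U * nE (z + m)) (eps V * nE (z + m'))"
      using that(1) eps_pos[OF that(4)] E.norm_ge_zero
      by (smt (verit, best) max_def mult_left_mono mult_right_mono)
    finally have "nF ((t' - t) - U (m' - m)) \<le> max (eps U * nE (z + m)) (eps V * nE (z + m'))" .
    moreover have "nF (U (z + m') - V (z + m')) \<le> eps V * nE (z + m')"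
      using family_close that by (metis max.absorb2)
    moreover have "(U (z + m) - t) - (V (z + m') - t') = (U (z + m') - V (z + m')) + ((t' - t) - U (m' - m))"
      using cont_linear_diff[OF cont_linear_family[OF that(4)], of "z + m'" "z + m"]
      by (simp add: algebra_simps)
    ultimately show ?thesis
      using F.norm_add_le_max by (smt (verit) max.cobounded2)
  qed
  show ?thesis
  proof (cases "eps U \<le> eps V")
    case False
    then show ?thesis
      using ordered[of V U m' t' m t] mt UV F.norm_minus_commute by (simp add: max.commute)
  qed (use ordered mt UV in blast)
qed

lemma exists_extension_value:
  assumes "approx_graph G"
  shows "\<exists>w. \<forall>U\<in>\<U>. \<forall>(m, t)\<in>G. nF (w - (U (z + m) - t)) \<le> eps U * nE (z + m)"
proof -
  let ?c = "\<lambda>(U, m, t). U (z + m) - t" and ?r = "\<lambda>(U, m, t). eps U * nE (z + m)"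
  have "\<exists>w. \<forall>i\<in>\<U> \<times> G. nF (w - ?c i) \<le> ?r i"
  proof (rule F.spherically_complete_common_point[OF F_spherically_complete])
    fix i j assume "i \<in> \<U> \<times> G" "j \<in> \<U> \<times> G"
    then show "nF (?c i - ?c j) \<le> max (?r i) (?r j)"
      using approx_graph_centres_close[OF assms] by auto
  qed
  then show ?thesis
    by fastforce
qed

lemma approx_graph_extend_graph:
  assumes G: "approx_graph G" and z: "z \<notin> Domain G"
    and w: "\<forall>U\<in>\<U>. \<forall>(m, t)\<in>G. nF (w - (U (z + m) - t)) \<le> eps U * nE (z + m)"
  shows "approx_graph (extend_graph G z w)"
  unfolding approx_graph_def
proof (intro conjI allI impI)
  show "single_valued (extend_graph G z w)" "linear_graph smE smF (extend_graph G z w)"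
    using single_valued_extend_graph linear_graph_extend_graph approx_graphD[OF G] z by blast+
next
  fix x y U
  assume "(x, y) \<in> extend_graph G z w" and U: "U \<in> \<U>"
  then obtain m t a where mt: "(m, t) \<in> G" and xy: "x = m + smE a z" "y = t + smF a w"
    unfolding extend_graph_def by blast
  show "nF (y - U x) \<le> eps U * nE x"
  proof (cases "a = 0")
    case True
    then show ?thesis
      using approx_graphD(3)[OF G mt U] xy by simp
  next
    case False
    define m0 t0 where "m0 = smE (inverse a) m" and "t0 = smF (inverse a) t"
    have mt0: "(m0, t0) \<in> G"
      unfolding m0_def t0_def using linear_graph_scale[OF approx_graphD(2)[OF G] mt] .
    have x: "x = smE a (z + m0)" and y: "y = smF a (t0 + w)"
      using xy False by (simp_all add: m0_def t0_def E.scale_right_distrib F.scale_right_distrib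
          E.scale_scale F.scale_scale add.commute)
    have "y - U x = smF a (w - (U (z + m0) - t0))"
      unfolding x y cont_linear_scale[OF cont_linear_family[OF U]]
      by (simp add: F.scale_diff_right F.scale_right_distrib algebra_simps)
    then have "nF (y - U x) = absK a * nF (w - (U (z + m0) - t0))"
      by (simp add: F.norm_scale)
    also have "\<dots> \<le> absK a * (eps U * nE (z + m0))"
      using w mt0 U E.absK_nonneg by (fastforce intro: mult_left_mono)
    also have "\<dots> = eps U * nE x"
      unfolding x E.norm_scale by simp
    finally show ?thesis .
  qed
qed

lemma exists_total_approx_graph:
  assumes "approx_graph G0"
  shows "\<exists>G. approx_graph G \<and> G0 \<subseteq> G \<and> Domain G = UNIV"
proof -
  define A where "A = {G. approx_graph G \<and> G0 \<subseteq> G}"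
  have "\<exists>G\<in>A. \<forall>H\<in>A. G \<subseteq> H \<longrightarrow> H = G"
  proof (rule subset_Zorn_nonempty)
    show "A \<noteq> {}"
      using assms unfolding A_def by blast
    show "\<Union>C \<in> A" if C: "C \<noteq> {}" "subset.chain A C" for C
    proof -
      have "C \<subseteq> A" and chain: "\<And>G H. G \<in> C \<Longrightarrow> H \<in> C \<Longrightarrow> G \<subseteq> H \<or> H \<subseteq> G"
        using C(2) unfolding subset_chain_def by blast+
      then have "approx_graph (\<Union>C)" "G0 \<subseteq> \<Union>C"
        using approx_graph_Union[OF C(1)] C(1) unfolding A_def by blast+
      then show ?thesis
        unfolding A_def by blast
    qed
  qed
  then obtain G where "G \<in> A" and max: "\<And>H. H \<in> A \<Longrightarrow> G \<subseteq> H \<Longrightarrow> H = G"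
    by blast
  then have G: "approx_graph G" "G0 \<subseteq> G"
    unfolding A_def by blast+
  have "z \<in> Domain G" for z
  proof (rule ccontr)
    assume z: "z \<notin> Domain G"
    obtain w where w: "\<forall>U\<in>\<U>. \<forall>(m, t)\<in>G. nF (w - (U (z + m) - t)) \<le> eps U * nE (z + m)"
      using exists_extension_value[OF G(1)] by blast
    have "extend_graph G z w \<in> A"
      using approx_graph_extend_graph[OF G(1) z w] G(2) subset_extend_graph unfolding A_def by blast
    then have "extend_graph G z w = G"
      using max subset_extend_graph by blast
    moreover have "z \<in> Domain (extend_graph G z w)"
      using Domain_extend_graph linear_graph_zero[OF approx_graphD(2)[OF G(1)]] .
    ultimately show False
      using z by simp
  qed
  then show ?thesis
    using G by blast
qed

lemma exists_approximating_map:
  assumes "\<U> \<noteq> {}" and "approx_graph G0"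
  shows "\<exists>T. cont_linear_on smE nE smF nF UNIV T \<and> (\<forall>(x, y)\<in>G0. T x = y) \<and>
           (\<forall>U\<in>\<U>. \<forall>x. nF (T x - U x) \<le> eps U * nE x)"
proof -
  obtain G where G: "approx_graph G" "G0 \<subseteq> G" "Domain G = UNIV"
    using exists_total_approx_graph[OF assms(2)] by blast
  then have "\<forall>x. \<exists>y. (x, y) \<in> G"
    by blast
  then obtain T where T: "\<And>x. (x, T x) \<in> G"
    by metis
  have T_eq: "T x = y" if "(x, y) \<in> G" for x y
    using single_valuedD[OF approx_graphD(1)[OF G(1)] T that] .
  have add: "T (x + y) = T x + T y" and scale: "T (smE a x) = smF a (T x)" for x y a
    using T_eq linear_graph_add[OF approx_graphD(2)[OF G(1)] T T]
      linear_graph_scale[OF approx_graphD(2)[OF G(1)] T] by blast+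
  have close: "nF (T x - U x) \<le> eps U * nE x" if "U \<in> \<U>" for U x
    using approx_graphD(3)[OF G(1) T that] .
  obtain U0 where "U0 \<in> \<U>"
    using assms(1) by blast
  have "cont_linear_on smE nE smF nF UNIV T"
    using cont_linear_on_UNIV_if_close[OF add scale cont_linear_family[OF \<open>U0 \<in> \<U>\<close>]
        close[OF \<open>U0 \<in> \<U>\<close>] eps_pos[OF \<open>U0 \<in> \<U>\<close>]] .
  then show ?thesis
    using close T_eq G(2) by blast
qed

lemma approx_graph_of_map_on:
  assumes D: "linear_subspace smE D" and S: "cont_linear_on smE nE smF nF D S"
    and close: "\<And>U x. U \<in> \<U> \<Longrightarrow> x \<in> D \<Longrightarrow> nF (S x - U x) \<le> eps U * nE x"
  shows "approx_graph {(x, S x) |x. x \<in> D}"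
proof -
  have add: "S (x + y) = S x + S y" if "x \<in> D" "y \<in> D" for x y
    using S that unfolding cont_linear_on_def by blast
  have scale: "S (smE a x) = smF a (S x)" if "x \<in> D" for x a
    using S that unfolding cont_linear_on_def by blast
  have "0 \<in> D"
    using D unfolding linear_subspace_def by blast
  then have "S 0 = 0"
    using add[of 0 0] by simp
  then show ?thesis
    using D close add scale \<open>0 \<in> D\<close>
    unfolding approx_graph_def linear_graph_def linear_subspace_def single_valued_def by auto
qed

end

theorem proposition5p2:
  fixes absK :: "'k::field \<Rightarrow> real"
    and smE :: "'k \<Rightarrow> 'e::ab_group_add \<Rightarrow> 'e" and nE :: "'e \<Rightarrow> real"
    and smF :: "'k \<Rightarrow> 'f::ab_group_add \<Rightarrow> 'f" and nF :: "'f \<Rightarrow> real"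
    and D :: "'e set" and S :: "'e \<Rightarrow> 'f"
    and \<U> :: "('e \<Rightarrow> 'f) set" and eps :: "('e \<Rightarrow> 'f) \<Rightarrow> real"
  assumes K: "nonarch_valued_field absK"
    and E: "ultra_normed_space absK smE nE"
    and F: "ultra_normed_space absK smF nF"
    and Fsc: "spherically_complete nF"
    and D: "linear_subspace smE D"
    and S: "cont_linear_on smE nE smF nF D S"
    and U_sub: "\<forall>U\<in>\<U>. cont_linear_on smE nE smF nF UNIV U"
    and U_ne: "\<U> \<noteq> {}"
    and eps_pos: "\<forall>U\<in>\<U>. eps U > 0"
    and UV: "\<forall>U\<in>\<U>. \<forall>V\<in>\<U>. opnorm nE nF UNIV (\<lambda>x. U x - V x) \<le> max (eps U) (eps V)"
    and SU: "\<forall>U\<in>\<U>. \<forall>x\<in>D. nF (S x - U x) \<le> eps U * nE x"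
  shows "\<exists>Sbar. cont_linear_on smE nE smF nF UNIV Sbar \<and> (\<forall>x\<in>D. Sbar x = S x) \<and>
           (\<forall>U\<in>\<U>. opnorm nE nF UNIV (\<lambda>x. Sbar x - U x) \<le> eps U)"
proof -
  interpret ultra_normed_pair absK smE nE smF nF
    using K E F by (simp add: ultra_normed_pair_def ultra_normed_def ultra_normed_axioms_def
        nonarch_field_def)
  interpret approximating_family absK smE nE smF nF \<U> eps
    using Fsc U_sub eps_pos norm_diff_le_of_opnorm_le UV
    by unfold_locales (simp_all add: ultra_normed_pair_axioms)
  obtain T where T: "cont_linear_on smE nE smF nF UNIV T" "\<forall>x\<in>D. T x = S x"
    and close: "\<And>U x. U \<in> \<U> \<Longrightarrow> nF (T x - U x) \<le> eps U * nE x"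
    using exists_approximating_map[OF U_ne approx_graph_of_map_on[OF D S]] SU by fastforce
  have "opnorm nE nF UNIV (\<lambda>x. T x - U x) \<le> eps U" if "U \<in> \<U>" for U
    using opnorm_le close that eps_pos by (simp add: less_imp_le)
  then show ?thesis
    using T by blast
qed

end
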